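(* Let $A,B\subset\mathbb R^p$ be two disjoint compact sets of Lebesgue measure $0$, and let $C\in\mathbb R$. Then the set $D=\{\mathbf x\in\mathbb R^p: d(\mathbf x,A)^2-d(\mathbf x,B)^2=C\}$ has Lebesgue measure $0$.
   Context: For $\mathbf x\in\mathbb R^p$ and $A\subset\mathbb R^p$, $d(\mathbf x,A)=\inf_{\mathbf y\in A}\|\mathbf x-\mathbf y\|$ (Euclidean distance). *)

theory Defs
  imports "HOL-Analysis.Analysis"
begin

end

theory Submission
  imports Defs
begin

text \<open>Let \<open>f = d(\<cdot>,A)\<^sup>2 - d(\<cdot>,B)\<^sup>2\<close> and let \<open>x \<notin> A \<union> B\<close>, say with \<open>d(x,A) \<le> d(x,B)\<close>.
  If \<open>b\<close> is a nearest point of \<open>B\<close> to \<open>x\<close> and \<open>a\<close> a nearest point of \<open>A\<close> to \<open>y\<close>, then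
  \<open>f y - f x \<ge> 2 (y - x) \<bullet> (b - a)\<close>. Since \<open>A\<close> is compact and misses \<open>b\<close>, the points of \<open>A\<close>
  that are almost closest to \<open>x\<close> satisfy \<open>(b - x) \<bullet> (b - a) \<ge> m > 0\<close> uniformly; hence \<open>f\<close>
  strictly increases on a cone of balls \<open>ball (x + t u) (\<rho> t)\<close> around the direction
  \<open>u\<close> of \<open>b - x\<close>. So every point of the level set \<open>{f = C}\<close> outside \<open>A \<union> B\<close> is a
  point of porosity, where the set has density at most \<open>1 - (\<rho>/2)\<^sup>n\<close> in arbitrarily small
  balls; by the Vitali covering theorem such a set is negligible.\<close>

definition porous_at :: "real \<Rightarrow> 'a::real_normed_vector set \<Rightarrow> 'a \<Rightarrow> bool" where
  "porous_at \<rho> D x \<longleftrightarrow>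
     (\<exists>\<delta>>0. \<exists>u. norm u = 1 \<and> (\<forall>t. 0 < t \<longrightarrow> t < \<delta> \<longrightarrow> ball (x + t *\<^sub>R u) (\<rho> * t) \<inter> D = {}))"

lemma porous_at_mono:
  assumes "porous_at \<rho> D x" and "\<rho>' \<le> \<rho>" and "D' \<subseteq> D"
  shows "porous_at \<rho>' D' x"
proof -
  have "ball c (\<rho>' * t) \<subseteq> ball c (\<rho> * t)" if "0 < t" for c and t :: real
    using assms(2) that by (intro subset_ball mult_right_mono) auto
  then show ?thesis
    using assms(1,3) unfolding porous_at_def by blast
qed

lemma porous_at_density_deficient:
  fixes D :: "'a::euclidean_space set"
  assumes "D \<in> sets lebesgue" and "porous_at \<rho> D x" and "0 < \<rho>" and "\<rho> \<le> 1" and "0 < r"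
  shows "\<exists>d. 0 < d \<and> d \<le> r \<and>
           measure lebesgue (D \<inter> ball x d) \<le> (1 - (\<rho> / 2) ^ DIM('a)) * measure lebesgue (ball x d)"
proof -
  obtain \<delta> u where "0 < \<delta>" and "norm u = 1"
    and hole: "\<And>t. 0 < t \<Longrightarrow> t < \<delta> \<Longrightarrow> ball (x + t *\<^sub>R u) (\<rho> * t) \<inter> D = {}"
    using assms(2) unfolding porous_at_def by blast
  define d where "d = min r \<delta>"
  have "0 < d" and "d \<le> r" and "d / 2 < \<delta>"
    using \<open>0 < r\<close> \<open>0 < \<delta>\<close> unfolding d_def by auto
  have "\<rho> * d \<le> d"
    using \<open>\<rho> \<le> 1\<close> \<open>0 < d\<close> by simp
  define H where "H = ball (x + (d / 2) *\<^sub>R u) (\<rho> * (d / 2))"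
  have "H \<subseteq> ball x d"
    unfolding H_def
    using \<open>norm u = 1\<close> \<open>0 < d\<close> by (auto simp: ball_subset_ball_iff dist_norm) (use \<open>\<rho> * d \<le> d\<close> in linarith)
  have "D \<inter> ball x d \<subseteq> ball x d - H"
    using hole[OF _ \<open>d / 2 < \<delta>\<close>] \<open>0 < d\<close> unfolding H_def by auto
  moreover have "D \<inter> ball x d \<in> lmeasurable"
    using fmeasurable_Int_fmeasurable[OF lmeasurable_ball assms(1)] by (simp add: Int_commute)
  ultimately have "measure lebesgue (D \<inter> ball x d) \<le> measure lebesgue (ball x d - H)"
    by (intro measure_mono_fmeasurable) (auto simp: H_def)
  also have "\<dots> = measure lebesgue (ball x d) - measure lebesgue H"
    using \<open>H \<subseteq> ball x d\<close> emeasure_lborel_ball_finite[of x d] by (intro measure_Diff) (auto simp: H_def)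
  also have "measure lebesgue H = (\<rho> / 2) ^ DIM('a) * measure lebesgue (ball x d)"
    using \<open>0 < d\<close> \<open>0 < \<rho>\<close> content_ball_conv_unit_ball[of "(\<rho> / 2) * d" "x + (d / 2) *\<^sub>R u"]
      content_ball_conv_unit_ball[of d x]
    by (simp add: H_def power_divide power_mult_distrib)
  finally show ?thesis
    using \<open>0 < d\<close> \<open>d \<le> r\<close> by (auto simp: algebra_simps)
qed

lemma measure_disjoint_UN_le_divide:
  assumes "countable I" and disj: "pairwise (\<lambda>i j. disjnt (F i) (F j)) I"
    and F: "\<And>i. i \<in> I \<Longrightarrow> F i \<in> fmeasurable M" and V: "V \<in> fmeasurable M" and "0 < c"
    and fraction: "\<And>i. i \<in> I \<Longrightarrow> c * measure M (F i) \<le> measure M (F i \<inter> V)"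
  shows "(\<Union>i\<in>I. F i) \<in> fmeasurable M" and "measure M (\<Union>i\<in>I. F i) \<le> measure M V / c"
proof -
  have bound: "measure M (\<Union>i\<in>J. F i) \<le> measure M V / c" if "J \<subseteq> I" "finite J" for J
  proof -
    have disjJ: "pairwise (\<lambda>i j. disjnt (F i) (F j)) J"
      using disj \<open>J \<subseteq> I\<close> by (rule pairwise_subset)
    then have disjJV: "pairwise (\<lambda>i j. disjnt (F i \<inter> V) (F j \<inter> V)) J"
      by (rule pairwise_mono) (auto simp: disjnt_def)
    have "c * measure M (\<Union>i\<in>J. F i) = (\<Sum>i\<in>J. c * measure M (F i))"
      using that F disjJ by (simp add: measure_UNION' sum_distrib_left subset_iff)
    also have "\<dots> \<le> (\<Sum>i\<in>J. measure M (F i \<inter> V))"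
      using that fraction by (intro sum_mono) auto
    also have "\<dots> = measure M (\<Union>i\<in>J. F i \<inter> V)"
      using that F V disjJV by (intro measure_UNION'[symmetric]) auto
    also have "\<dots> \<le> measure M V"
      using that F V by (intro measure_mono_fmeasurable) (auto intro!: sets.finite_UN dest: fmeasurableD)
    finally show ?thesis
      using \<open>0 < c\<close> by (simp add: field_simps)
  qed
  show "(\<Union>i\<in>I. F i) \<in> fmeasurable M"
    by (rule fmeasurable_UN_bound[OF \<open>countable I\<close> F bound])
  show "measure M (\<Union>i\<in>I. F i) \<le> measure M V / c"
    by (rule measure_UN_bound[OF \<open>countable I\<close> F bound])
qed

lemma Vitali_covering_deficient_balls:
  fixes S P U :: "'a::euclidean_space set"
  assumes "open U" and "P \<subseteq> U"
    and deficient: "\<And>x r. x \<in> P \<Longrightarrow> 0 < r \<Longrightarrow> \<exists>d. 0 < d \<and> d \<le> r \<and>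
               measure lebesgue (S \<inter> ball x d) \<le> (1 - c) * measure lebesgue (ball x d)"
  obtains I where "countable I"
    and "pairwise (\<lambda>i j. disjnt (ball (fst i) (snd i)) (ball (fst j) (snd j))) I"
    and "\<And>i. i \<in> I \<Longrightarrow> ball (fst i) (snd i) \<subseteq> U \<and>
           measure lebesgue (S \<inter> ball (fst i) (snd i)) \<le> (1 - c) * measure lebesgue (ball (fst i) (snd i))"
    and "negligible (P - (\<Union>i\<in>I. ball (fst i) (snd i)))"
proof -
  define K where "K = {(x, d). ball x d \<subseteq> U \<and>
       measure lebesgue (S \<inter> ball x d) \<le> (1 - c) * measure lebesgue (ball x d)}"
  have cover: "\<exists>i. i \<in> K \<and> x \<in> ball (fst i) (snd i) \<and> snd i < r" if "x \<in> P" and "0 < r" for x r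
  proof -
    obtain k where "0 < k" and "ball x k \<subseteq> U"
      using \<open>open U\<close> \<open>P \<subseteq> U\<close> \<open>x \<in> P\<close> open_contains_ball by blast
    obtain d where "0 < d" and "d \<le> min (r / 2) k"
      and "measure lebesgue (S \<inter> ball x d) \<le> (1 - c) * measure lebesgue (ball x d)"
      using deficient[OF \<open>x \<in> P\<close>, of "min (r / 2) k"] \<open>0 < r\<close> \<open>0 < k\<close> by auto
    moreover have "ball x d \<subseteq> U"
      using \<open>ball x k \<subseteq> U\<close> \<open>d \<le> min (r / 2) k\<close> by (meson min.boundedE subset_ball order_trans)
    ultimately show ?thesis
      using \<open>0 < r\<close> by (intro exI[of _ "(x, d)"]) (auto simp: K_def)
  qed
  obtain I where "countable I" and "I \<subseteq> K"
    and "pairwise (\<lambda>i j. disjnt (ball (fst i) (snd i)) (ball (fst j) (snd j))) I"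
    and "negligible (P - (\<Union>i\<in>I. ball (fst i) (snd i)))"
    by (rule Vitali_covering_theorem_balls[of P K fst snd, OF cover])
  moreover have "\<And>i. i \<in> I \<Longrightarrow> ball (fst i) (snd i) \<subseteq> U \<and>
      measure lebesgue (S \<inter> ball (fst i) (snd i)) \<le> (1 - c) * measure lebesgue (ball (fst i) (snd i))"
    using \<open>I \<subseteq> K\<close> by (auto simp: K_def case_prod_unfold)
  ultimately show ?thesis
    using that by blast
qed

lemma measure_Int_ge_if_density_deficient:
  assumes "S \<in> sets lebesgue" and "X \<in> lmeasurable" and "W \<in> sets lebesgue" and "X \<subseteq> S \<union> W"
    and "measure lebesgue (S \<inter> X) \<le> (1 - c) * measure lebesgue X"
  shows "c * measure lebesgue X \<le> measure lebesgue (X \<inter> W)"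
proof -
  have SX: "S \<inter> X \<in> lmeasurable"
    using fmeasurable_Int_fmeasurable[OF assms(2,1)] by (simp add: Int_commute)
  have XW: "X \<inter> W \<in> lmeasurable"
    using fmeasurable_Int_fmeasurable[OF assms(2,3)] .
  have "measure lebesgue X \<le> measure lebesgue ((S \<inter> X) \<union> (X \<inter> W))"
    using assms(2,4) SX XW by (intro measure_mono_fmeasurable) (auto intro: fmeasurable.Un)
  also have "\<dots> \<le> measure lebesgue (S \<inter> X) + measure lebesgue (X \<inter> W)"
    using SX XW by (intro measure_Un_le) (auto dest: fmeasurableD)
  finally show ?thesis
    using assms(5) by (simp add: algebra_simps)
qed

lemma negligible_if_density_deficient_bounded:
  fixes S P :: "'a::euclidean_space set"
  assumes S: "S \<in> sets lebesgue" and "P \<subseteq> S" and "bounded P" and "0 < c"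
    and deficient: "\<And>x r. x \<in> P \<Longrightarrow> 0 < r \<Longrightarrow> \<exists>d. 0 < d \<and> d \<le> r \<and>
               measure lebesgue (S \<inter> ball x d) \<le> (1 - c) * measure lebesgue (ball x d)"
  shows "negligible P"
proof (clarsimp simp: negligible_outer_le)
  fix e :: real
  assume "0 < e"
  obtain R where "P \<subseteq> ball 0 R"
    using \<open>bounded P\<close> bounded_subset_ballD by blast
  define T where "T = S \<inter> ball 0 R"
  have "T \<in> sets lebesgue"
    unfolding T_def using S by auto
  then obtain U where "open U" and "T \<subseteq> U" and V: "U - T \<in> lmeasurable"
    and "emeasure lebesgue (U - T) < ennreal (c * e)"
    using sets_lebesgue_outer_open[of T "c * e"] \<open>0 < c\<close> \<open>0 < e\<close> by auto
  then have "measure lebesgue (U - T) \<le> c * e"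
    using \<open>0 < c\<close> \<open>0 < e\<close> by (simp add: emeasure_eq_measure2 ennreal_less_iff)
  have "P \<subseteq> U"
    using \<open>P \<subseteq> ball 0 R\<close> \<open>P \<subseteq> S\<close> \<open>T \<subseteq> U\<close> unfolding T_def by auto
  then obtain I where "countable I"
    and disj: "pairwise (\<lambda>i j. disjnt (ball (fst i) (snd i)) (ball (fst j) (snd j))) I"
    and balls: "\<And>i. i \<in> I \<Longrightarrow> ball (fst i) (snd i) \<subseteq> U \<and>
           measure lebesgue (S \<inter> ball (fst i) (snd i)) \<le> (1 - c) * measure lebesgue (ball (fst i) (snd i))"
    and rest: "negligible (P - (\<Union>i\<in>I. ball (fst i) (snd i)))"
    using Vitali_covering_deficient_balls[OF \<open>open U\<close> _ deficient] by blast
  define Y where "Y = (\<Union>i\<in>I. ball (fst i) (snd i))"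
  have "c * measure lebesgue (ball (fst i) (snd i)) \<le> measure lebesgue (ball (fst i) (snd i) \<inter> (U - T))"
    if "i \<in> I" for i
    using balls[OF that] by (intro measure_Int_ge_if_density_deficient[OF S _ fmeasurableD[OF V]]) (auto simp: T_def)
  then have "Y \<in> lmeasurable" and "measure lebesgue Y \<le> measure lebesgue (U - T) / c"
    unfolding Y_def using measure_disjoint_UN_le_divide[OF \<open>countable I\<close> disj _ V \<open>0 < c\<close>] by auto
  moreover have "measure lebesgue (U - T) / c \<le> e"
    using \<open>measure lebesgue (U - T) \<le> c * e\<close> \<open>0 < c\<close> by (simp add: divide_le_eq mult.commute)
  ultimately have "measure lebesgue Y \<le> e"
    by linarith
  have "P - Y \<in> null_sets lebesgue"
    using rest by (simp add: Y_def negligible_iff_null_sets)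
  show "\<exists>T. P \<subseteq> T \<and> T \<in> lmeasurable \<and> measure lebesgue T \<le> e"
  proof (intro exI conjI)
    show "P \<subseteq> Y \<union> (P - Y)"
      by blast
    show "Y \<union> (P - Y) \<in> lmeasurable"
      by (rule fmeasurable.Un[OF \<open>Y \<in> lmeasurable\<close> fmeasurableI_null_sets[OF \<open>P - Y \<in> null_sets lebesgue\<close>]])
    show "measure lebesgue (Y \<union> (P - Y)) \<le> e"
      using measure_Un_null_set[OF fmeasurableD[OF \<open>Y \<in> lmeasurable\<close>] \<open>P - Y \<in> null_sets lebesgue\<close>]
        \<open>measure lebesgue Y \<le> e\<close> by linarith
  qed
qed

lemma negligible_if_density_deficient:
  fixes S P :: "'a::euclidean_space set"
  assumes "S \<in> sets lebesgue" and "P \<subseteq> S" and "0 < c"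
    and "\<And>x r. x \<in> P \<Longrightarrow> 0 < r \<Longrightarrow> \<exists>d. 0 < d \<and> d \<le> r \<and>
               measure lebesgue (S \<inter> ball x d) \<le> (1 - c) * measure lebesgue (ball x d)"
  shows "negligible P"
proof -
  have "negligible (P \<inter> ball 0 (real n))" for n
    using assms by (intro negligible_if_density_deficient_bounded[of S _ c]) auto
  then have "negligible (\<Union>n. P \<inter> ball 0 (real n))"
    by (rule negligible_Union_nat)
  moreover have "P \<subseteq> (\<Union>n. P \<inter> ball 0 (real n))"
    using reals_Archimedean2 by fastforce
  ultimately show ?thesis
    by (rule negligible_subset)
qed

lemma negligible_if_porous:
  fixes D P :: "'a::euclidean_space set"
  assumes "D \<in> sets lebesgue" and "P \<subseteq> D" and porous: "\<And>x. x \<in> P \<Longrightarrow> \<exists>\<rho>>0. porous_at \<rho> D x"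
  shows "negligible P"
proof -
  define Q where "Q k = {x \<in> P. porous_at (inverse (Suc k)) D x}" for k :: nat
  have "negligible (Q k)" for k
  proof (rule negligible_if_density_deficient[OF assms(1)])
    show "Q k \<subseteq> D"
      using \<open>P \<subseteq> D\<close> unfolding Q_def by auto
    show "0 < (inverse (Suc k) / 2) ^ DIM('a)"
      by simp
    show "\<exists>d. 0 < d \<and> d \<le> r \<and> measure lebesgue (D \<inter> ball x d)
        \<le> (1 - (inverse (Suc k) / 2) ^ DIM('a)) * measure lebesgue (ball x d)"
      if "x \<in> Q k" and "0 < r" for x r
      using that by (intro porous_at_density_deficient[OF assms(1)]) (auto simp: Q_def inverse_le_1_iff)
  qed
  then have "negligible (\<Union>k. Q k)"
    by (rule negligible_Union_nat)
  moreover have "P \<subseteq> (\<Union>k. Q k)"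
  proof
    fix x
    assume "x \<in> P"
    then obtain \<rho> where "0 < \<rho>" and "porous_at \<rho> D x"
      using porous by blast
    moreover obtain k where "inverse (real (Suc k)) < \<rho>"
      using reals_Archimedean[OF \<open>0 < \<rho>\<close>] by blast
    ultimately have "x \<in> Q k"
      using \<open>x \<in> P\<close> unfolding Q_def by (auto intro: porous_at_mono)
    then show "x \<in> (\<Union>k. Q k)"
      by blast
  qed
  ultimately show ?thesis
    by (rule negligible_subset)
qed

lemma infdist_sq_diff_ge_inner:
  fixes x y a b :: "'a::real_inner"
  assumes "a \<in> A" and "infdist y A = dist y a" and "b \<in> B" and "infdist x B = dist x b"
  shows "2 * ((y - x) \<bullet> (b - a))
           \<le> ((infdist y A)\<^sup>2 - (infdist y B)\<^sup>2) - ((infdist x A)\<^sup>2 - (infdist x B)\<^sup>2)"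
proof -
  have "(infdist x A)\<^sup>2 \<le> (dist x a)\<^sup>2" and "(infdist y B)\<^sup>2 \<le> (dist y b)\<^sup>2"
    using assms(1,3) by (auto intro!: power_mono infdist_le infdist_nonneg)
  moreover have "(dist y a)\<^sup>2 - (dist x a)\<^sup>2 - ((dist y b)\<^sup>2 - (dist x b)\<^sup>2) = 2 * ((y - x) \<bullet> (b - a))"
    by (simp add: dist_norm power2_norm_eq_inner inner_diff_left inner_diff_right inner_commute
        algebra_simps)
  ultimately show ?thesis
    unfolding assms(2,4) by linarith
qed

lemma dist_nearest_point_le:
  assumes "a \<in> A" and "infdist y A = dist y a"
  shows "dist x a \<le> infdist x A + 2 * dist x y"
  using dist_triangle[of x a y] infdist_triangle[of y A x] assms(2) by (simp add: dist_commute)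

lemma inner_pos_near_ray:
  fixes u v w :: "'a::real_inner"
  assumes "0 < t" and "0 < \<kappa>" and "\<kappa> \<le> u \<bullet> w" and "norm w \<le> M" and "\<rho> * M \<le> \<kappa>"
    and "norm (v - t *\<^sub>R u) < \<rho> * t"
  shows "0 < v \<bullet> w"
proof -
  have "w \<noteq> 0"
    using assms(2,3) by auto
  then have "norm (v - t *\<^sub>R u) * norm w < \<rho> * t * norm w"
    using assms(6) by simp
  also have "\<dots> \<le> \<rho> * t * M"
  proof (rule mult_left_mono)
    show "0 \<le> \<rho> * t"
      using assms(6) norm_ge_zero[of "v - t *\<^sub>R u"] by linarith
  qed (use assms(4) in simp)
  also have "\<dots> = t * (\<rho> * M)"
    by simp
  also have "\<dots> \<le> t * (u \<bullet> w)"
    using assms(1,3,5) by (intro mult_left_mono) auto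
  finally have "\<bar>(v - t *\<^sub>R u) \<bullet> w\<bar> < t * (u \<bullet> w)"
    using Cauchy_Schwarz_ineq2 order.strict_trans1 by blast
  then show ?thesis
    by (simp add: inner_diff_left)
qed

lemma near_nearest_points_margin:
  fixes A :: "'a::real_inner set"
  assumes "compact A" and "A \<noteq> {}" and "b \<notin> A" and "infdist x A \<le> dist x b"
  shows "\<exists>m>0. \<forall>a\<in>A. dist x a < infdist x A + m \<longrightarrow> m \<le> (b - x) \<bullet> (b - a)"
proof -
  define \<phi> where "\<phi> a = max ((b - x) \<bullet> (b - a)) (dist x a - infdist x A)" for a
  have "continuous_on A \<phi>"
    unfolding \<phi>_def by (intro continuous_intros)
  then obtain a0 where "a0 \<in> A" and a0_min: "\<And>a. a \<in> A \<Longrightarrow> \<phi> a0 \<le> \<phi> a"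
    using continuous_attains_inf[OF assms(1,2)] by blast
  have "0 < \<phi> a0"
  proof (cases "dist x a0 \<le> infdist x A")
    case True
    have "2 * ((b - x) \<bullet> (b - a0)) = (dist x b)\<^sup>2 - (dist x a0)\<^sup>2 + (dist b a0)\<^sup>2"
      by (simp add: dist_norm power2_norm_eq_inner inner_diff_left inner_diff_right
          inner_commute algebra_simps)
    moreover have "(dist x a0)\<^sup>2 \<le> (dist x b)\<^sup>2"
      using True assms(4) by (simp add: power_mono)
    moreover have "0 < (dist b a0)\<^sup>2"
      using \<open>a0 \<in> A\<close> assms(3) by auto
    ultimately have "0 < (b - x) \<bullet> (b - a0)"
      by linarith
    then show ?thesis
      unfolding \<phi>_def by simp
  qed (simp add: \<phi>_def)
  moreover have "\<phi> a0 \<le> (b - x) \<bullet> (b - a)" if "a \<in> A" "dist x a < infdist x A + \<phi> a0" for a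
    using a0_min[OF that(1)] that(2) unfolding \<phi>_def by linarith
  ultimately show ?thesis
    by blast
qed

lemma infdist_sq_diff_porous_sublevel:
  fixes A B :: "'a::euclidean_space set"
  assumes A: "compact A" "A \<noteq> {}" and B: "compact B" "B \<noteq> {}"
    and "A \<inter> B = {}" and "x \<notin> B" and "infdist x A \<le> infdist x B"
  defines "f \<equiv> \<lambda>y. (infdist y A)\<^sup>2 - (infdist y B)\<^sup>2"
  shows "\<exists>\<rho>>0. porous_at \<rho> {y. f y \<le> f x} x"
proof -
  obtain b where "b \<in> B" and b_nearest: "infdist x B = dist x b"
    using infdist_attains_inf[OF compact_imp_closed[OF B(1)] B(2)] by blast
  define s where "s = dist x b"
  have "0 < s"
    using \<open>b \<in> B\<close> \<open>x \<notin> B\<close> unfolding s_def by auto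
  obtain m where "0 < m" and margin:
    "\<And>a. a \<in> A \<Longrightarrow> dist x a < infdist x A + m \<Longrightarrow> m \<le> (b - x) \<bullet> (b - a)"
    using near_nearest_points_margin[OF A, of b x] \<open>b \<in> B\<close> assms(5,7) b_nearest by auto
  obtain M where "0 < M" and M: "\<And>a. a \<in> A \<Longrightarrow> norm (b - a) \<le> M"
    using compact_imp_bounded[OF compact_translation[OF compact_negations[OF A(1)], of b]]
    unfolding bounded_pos by auto
  define u where "u = (1 / s) *\<^sub>R (b - x)"
  define \<rho> where "\<rho> = min 1 (m / s / M)"
  have "0 < \<rho>" and "\<rho> \<le> 1" and "\<rho> * M \<le> m / s"
    using \<open>0 < m\<close> \<open>0 < s\<close> \<open>0 < M\<close> by (auto simp: \<rho>_def min_mult_distrib_right)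
  have "norm u = 1"
    using \<open>0 < s\<close> unfolding u_def s_def by (simp add: dist_norm norm_minus_commute)
  have increase: "f x < f y" if "0 < t" "t < m / 4" "y \<in> ball (x + t *\<^sub>R u) (\<rho> * t)" for t y
  proof -
    have yxtu: "norm (y - x - t *\<^sub>R u) < \<rho> * t"
      using that(3) by (simp add: dist_norm norm_minus_commute algebra_simps)
    have "\<rho> * t \<le> t"
      using \<open>\<rho> \<le> 1\<close> \<open>0 < t\<close> by simp
    moreover have "dist x y \<le> t + norm (y - x - t *\<^sub>R u)"
      using \<open>norm u = 1\<close> \<open>0 < t\<close> norm_triangle_ineq[of "t *\<^sub>R u" "y - x - t *\<^sub>R u"]
      by (simp add: dist_norm norm_minus_commute)
    ultimately have "dist x y < 2 * t"
      using yxtu by linarith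
    obtain a where "a \<in> A" and a_nearest: "infdist y A = dist y a"
      using infdist_attains_inf[OF compact_imp_closed[OF A(1)] A(2)] by blast
    have "dist x a < infdist x A + m"
      using dist_nearest_point_le[OF \<open>a \<in> A\<close> a_nearest, of x] \<open>dist x y < 2 * t\<close> that(2) by linarith
    then have "m / s \<le> u \<bullet> (b - a)"
      using margin[OF \<open>a \<in> A\<close>] \<open>0 < s\<close> unfolding u_def by (simp add: divide_right_mono)
    then have "0 < (y - x) \<bullet> (b - a)"
      using inner_pos_near_ray[OF \<open>0 < t\<close> _ _ M[OF \<open>a \<in> A\<close>] \<open>\<rho> * M \<le> m / s\<close> yxtu]
        \<open>0 < m\<close> \<open>0 < s\<close> by simp
    then show ?thesis
      using infdist_sq_diff_ge_inner[OF \<open>a \<in> A\<close> a_nearest \<open>b \<in> B\<close> b_nearest] unfolding f_def by linarith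
  qed
  have "porous_at \<rho> {y. f y \<le> f x} x"
    unfolding porous_at_def
    using \<open>0 < m\<close> \<open>norm u = 1\<close> increase by (intro exI[of _ "m / 4"] exI[of _ u]) force
  with \<open>0 < \<rho>\<close> show ?thesis
    by blast
qed

lemma infdist_sq_diff_porous_level:
  fixes A B :: "'a::euclidean_space set"
  assumes "compact A" "A \<noteq> {}" "compact B" "B \<noteq> {}" "A \<inter> B = {}" "x \<notin> A \<union> B"
    and "(infdist x A)\<^sup>2 - (infdist x B)\<^sup>2 = C"
  shows "\<exists>\<rho>>0. porous_at \<rho> {y. (infdist y A)\<^sup>2 - (infdist y B)\<^sup>2 = C} x"
proof (cases "infdist x A \<le> infdist x B")
  case True
  then obtain \<rho> where "0 < \<rho>"
    and P: "porous_at \<rho> {y. (infdist y A)\<^sup>2 - (infdist y B)\<^sup>2 \<le> (infdist x A)\<^sup>2 - (infdist x B)\<^sup>2} x"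
    using infdist_sq_diff_porous_sublevel[of A B x] assms by auto
  have "porous_at \<rho> {y. (infdist y A)\<^sup>2 - (infdist y B)\<^sup>2 = C} x"
    using P by (rule porous_at_mono) (use assms(7) in auto)
  with \<open>0 < \<rho>\<close> show ?thesis
    by blast
next
  case False
  then obtain \<rho> where "0 < \<rho>"
    and P: "porous_at \<rho> {y. (infdist y B)\<^sup>2 - (infdist y A)\<^sup>2 \<le> (infdist x B)\<^sup>2 - (infdist x A)\<^sup>2} x"
    using infdist_sq_diff_porous_sublevel[of B A x] assms False by (auto simp: Int_commute)
  have "porous_at \<rho> {y. (infdist y A)\<^sup>2 - (infdist y B)\<^sup>2 = C} x"
    using P by (rule porous_at_mono) (use assms(7) in auto)
  with \<open>0 < \<rho>\<close> show ?thesis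
    by blast
qed

theorem mainTheorem17:
  fixes A B :: "(real ^ 'n) set" and C :: real
  assumes "compact A" and "compact B"
    and "A \<noteq> {}" and "B \<noteq> {}"
    and "A \<inter> B = {}"
    and "A \<in> null_sets lebesgue" and "B \<in> null_sets lebesgue"
  shows "{x. (infdist x A)\<^sup>2 - (infdist x B)\<^sup>2 = C} \<in> null_sets lebesgue"
proof -
  define D where "D = {x. (infdist x A)\<^sup>2 - (infdist x B)\<^sup>2 = C}"
  have "closed D"
    unfolding D_def by (intro closed_Collect_eq continuous_intros)
  then have "negligible (D - (A \<union> B))"
    using infdist_sq_diff_porous_level[OF assms(1,3,2,4,5)]
    by (intro negligible_if_porous[of D]) (auto simp: D_def)
  moreover have "negligible A" and "negligible B"
    using assms(6,7) by (simp_all add: negligible_iff_null_sets)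
  ultimately have "negligible (A \<union> B \<union> (D - (A \<union> B)))"
    by (intro negligible_Un)
  then have "negligible D"
    by (rule negligible_subset) blast
  then show ?thesis
    unfolding D_def by (simp add: negligible_iff_null_sets)
qed

end
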